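(* Let $P\subset\mathbb{R}^d$ be a full-dimensional lattice polytope with codegree $a$ satisfying $P=\lfloor aP\rfloor+\{P\}$. Then $aP=\lfloor aP\rfloor+\{aP\}$. Moreover, $\{aP\}=(a-1)P+\{P\}$.
   Context: $P$ has facet presentation $P=\{x: n_F(x)\ge -h_F\ \forall \text{ facets } F\}$ with $n_F\in(\mathbb{Z}^d)^*$ primitive inner normals and $h_F\in\mathbb{Z}$. The codegree of a lattice polytope $Q$ is $a_Q=\min\{k\in\mathbb{Z}_{\ge1}: \mathrm{int}(kQ)\cap\mathbb{Z}^d\ne\varnothing\}$; $a=a_P$. For a lattice polytope $Q$, $\lfloor Q\rfloor=\mathrm{conv}(\mathrm{int}(Q)\cap\mathbb{Z}^d)$, and the remainder polytope of $Q$, with facet presentation $Q=\{x: n_G(x)\ge -g_G\}$ (primitive inner normals, integer heights), is $\{Q\}=\mathrm{conv}\{x\in\mathbb{Z}^d: n_G(x)\ge (a_Q-1)g_G-1\ \forall \text{ facets } G\}$. In particular $aP$ has codegree $1$ and facet heights $ah_F$, so $\{aP\}=\mathrm{conv}\{x\in\mathbb{Z}^d: n_F(x)\ge -1\ \forall F\}$. $+$ is Minkowski sum and $0\cdot P=\{0\}$. *)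

theory Defs
  imports "HOL-Analysis.Analysis"
begin

definition lattice_pts :: "(real^'n) set" where
  "lattice_pts = {x. \<forall>i. x $ i \<in> \<int>}"

definition lattice_polytope :: "(real^'n) set \<Rightarrow> bool" where
  "lattice_polytope Q \<longleftrightarrow> (\<exists>S. finite S \<and> S \<subseteq> lattice_pts \<and> Q = convex hull S)"

definition dil :: "nat \<Rightarrow> (real^'n) set \<Rightarrow> (real^'n) set" where
  "dil k Q = (\<lambda>x. real k *\<^sub>R x) ` Q"

definition codegree :: "(real^'n) set \<Rightarrow> nat" where
  "codegree Q = (LEAST k::nat. k \<ge> 1 \<and> interior (dil k Q) \<inter> lattice_pts \<noteq> {})"

definition primitive :: "real^'n \<Rightarrow> bool" where
  "primitive v \<longleftrightarrow> v \<in> lattice_pts \<and> (\<forall>c::real. c *\<^sub>R v \<in> lattice_pts \<longrightarrow> c \<in> \<int>)"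

definition facet_normal :: "(real^'n) set \<Rightarrow> real^'n \<Rightarrow> real \<Rightarrow> bool" where
  "facet_normal Q v h \<longleftrightarrow> (\<exists>G. G facet_of Q \<and> primitive v \<and>
      Q \<subseteq> {x. v \<bullet> x \<ge> - h} \<and> G \<subseteq> {x. v \<bullet> x = - h})"

definition lfloor :: "(real^'n) set \<Rightarrow> (real^'n) set" where
  "lfloor Q = convex hull (interior Q \<inter> lattice_pts)"

definition remainder :: "(real^'n) set \<Rightarrow> (real^'n) set" where
  "remainder Q = convex hull {x \<in> lattice_pts. \<forall>v h. facet_normal Q v h \<longrightarrow>
      v \<bullet> x \<ge> (real (codegree Q) - 1) * h - 1}"

end

theory Submission
  imports Defs
begin

(* Write Q = aP, A = floor(Q), R = {P} and D = (a - 1)P, so that P = A + R by hypothesis.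
   Since A is nonempty, Q has an interior lattice point and codegree 1, hence {Q} is spanned by
   the lattice points z with n_F(z) >= -1 for all facets F.  Comparing facet inequalities gives
   A + {Q} <= Q (an interior lattice point x of Q satisfies n_F(x) >= -a h_F + 1 by integrality)
   and D + R <= {Q} (the term (a - 1) h_F in the definition of {P} is compensated by D).
   Therefore Q <= D + P = A + (D + R) <= A + {Q} <= Q, i.e. Q = A + {Q}, and cancelling the
   bounded nonempty summand A from A + {Q} <= A + (D + R) yields {Q} = D + R.
   Facet inequalities suffice to test membership because a point outside a full-dimensional
   lattice polytope violates one of them; its primitive integral normal is obtained from a
   cofactor vector of lattice points spanning the facet. *)

section \<open>Lattice points and cofactor vectors\<close>

lemma lattice_pts_add: "x \<in> lattice_pts \<Longrightarrow> y \<in> lattice_pts \<Longrightarrow> x + y \<in> lattice_pts"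
  by (auto simp: lattice_pts_def)

lemma lattice_pts_diff: "x \<in> lattice_pts \<Longrightarrow> y \<in> lattice_pts \<Longrightarrow> x - y \<in> lattice_pts"
  by (auto simp: lattice_pts_def)

lemma lattice_pts_scaleR: "x \<in> lattice_pts \<Longrightarrow> c \<in> \<int> \<Longrightarrow> c *\<^sub>R x \<in> lattice_pts"
  by (auto simp: lattice_pts_def)

lemma lattice_pts_inner_Ints: "v \<in> lattice_pts \<Longrightarrow> x \<in> lattice_pts \<Longrightarrow> v \<bullet> x \<in> \<int>"
  unfolding inner_vec_def lattice_pts_def by (auto intro!: Ints_sum Ints_mult)

lemma Ints_less_imp_add_one_le:
  fixes p q :: real
  assumes "p \<in> \<int>" "q \<in> \<int>" "q < p"
  shows "q + 1 \<le> p"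
  using assms by (auto elim!: Ints_cases)

lemma uniform_discrete_lattice_pts: "uniform_discrete (lattice_pts :: (real^'n) set)"
proof (rule uniformI2)
  fix x y :: "real^'n"
  assume xy: "x \<in> lattice_pts" "y \<in> lattice_pts" and "x \<noteq> y"
  then obtain i where "(x - y) $ i \<noteq> 0" by (auto simp: vec_eq_iff)
  moreover have "(x - y) $ i \<in> \<int>"
    using lattice_pts_diff[OF xy] unfolding lattice_pts_def by blast
  ultimately have "1 \<le> \<bar>(x - y) $ i\<bar>" by (simp add: Ints_nonzero_abs_ge1)
  also have "\<dots> \<le> dist x y"
    using component_le_norm_cart[of "x - y" i] by (simp add: dist_norm)
  finally show "1 \<le> dist x y" .
qed simp

lemma bounded_lattice_pts_finite:
  fixes X :: "(real^'n) set"
  assumes "bounded X" "X \<subseteq> lattice_pts"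
  shows "finite X"
proof -
  have "uniform_discrete X"
    using uniform_discrete_lattice_pts assms(2) by (rule uniform_discrete_subset)
  then show ?thesis using assms(1) uniform_discrete_finite_iff by blast
qed

lemma det_Ints:
  fixes M :: "real^'n^'n"
  assumes "\<And>i j. M $ i $ j \<in> \<int>"
  shows "det M \<in> \<int>"
  unfolding det_def using assms by (auto intro!: Ints_sum Ints_mult Ints_prod)

definition cofactor_vector :: "('n \<Rightarrow> real^'n) \<Rightarrow> 'n \<Rightarrow> real^'n" where
  "cofactor_vector f k = (\<chi> j. det (\<chi> i. if i = k then axis j 1 else f i))"

lemma inner_cofactor_vector:
  "cofactor_vector f k \<bullet> x = det (\<chi> i. if i = k then x else f i)"
proof -
  have "det (\<chi> i. if i = k then x else f i)
      = det (\<chi> i. if i = k then (\<Sum>j\<in>UNIV. x $ j *s axis j 1) else f i)"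
    by (simp only: basis_expansion)
  also have "\<dots> = (\<Sum>j\<in>UNIV. det (\<chi> i. if i = k then x $ j *s axis j 1 else f i))"
    by (rule det_linear_row_sum) simp
  also have "\<dots> = (\<Sum>j\<in>UNIV. x $ j * det (\<chi> i. if i = k then axis j 1 else f i))"
    by (intro sum.cong refl det_row_mul)
  also have "\<dots> = cofactor_vector f k \<bullet> x"
    by (simp add: cofactor_vector_def inner_vec_def mult.commute)
  finally show ?thesis by simp
qed

lemma cofactor_vector_orthogonal: "j \<noteq> k \<Longrightarrow> cofactor_vector f k \<bullet> f j = 0"
  unfolding inner_cofactor_vector
  by (rule det_identical_rows[of j k]) (simp_all add: row_def vec_eq_iff)

lemma cofactor_vector_lattice_pts:
  assumes "\<And>i. i \<noteq> k \<Longrightarrow> f i \<in> lattice_pts"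
  shows "cofactor_vector f k \<in> lattice_pts"
proof -
  have "det (\<chi> i. if i = k then axis j 1 else f i) \<in> \<int>" for j
  proof (rule det_Ints)
    fix i l
    show "(\<chi> i. if i = k then axis j 1 else f i) $ i $ l \<in> \<int>"
      using assms[of i] by (cases "i = k") (simp_all add: lattice_pts_def axis_def)
  qed
  then show ?thesis by (simp add: cofactor_vector_def lattice_pts_def)
qed

lemma det_rows_nonzero:
  fixes f :: "'n \<Rightarrow> real^'n"
  assumes "inj f" "independent (range f)"
  shows "det (\<chi> i. f i) \<noteq> 0"
proof -
  have "rows (\<chi> i. f i) = range f" by (auto simp: rows_def row_def)
  moreover have "card (range f) = CARD('n)" using assms(1) by (simp add: card_image)
  ultimately show ?thesis
    using assms(2) by (simp add: det_eq_0_rank row_rank_def dim_eq_card_independent)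
qed

lemma exists_lattice_vector_orthogonal:
  fixes B :: "(real^'n) set"
  assumes B: "B \<subseteq> lattice_pts" "independent B" "card B = CARD('n) - 1"
  shows "\<exists>w\<in>lattice_pts. w \<noteq> 0 \<and> (\<forall>b\<in>B. w \<bullet> b = 0)"
proof -
  have finB: "finite B" using B(2) by (rule finiteI_independent)
  have card_pos: "0 < CARD('n)" by (simp add: finite_UNIV_card_ge_0)
  have "span B \<noteq> UNIV"
  proof
    assume "span B = UNIV"
    then have "card B = CARD('n)"
      using dim_span[of B] by (simp add: dim_eq_card_independent[OF B(2)])
    then show False using B(3) card_pos by arith
  qed
  then obtain a where a: "a \<notin> span B" by blast
  have indep: "independent (insert a B)" using a B(2) by (rule independent_insertI)
  have "a \<notin> B" using a span_base by blast
  then have card: "card (insert a B) = CARD('n)"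
    using finB B(3) card_pos by simp
  then obtain f :: "'n \<Rightarrow> real^'n" where f: "bij_betw f UNIV (insert a B)"
    using finite_same_card_bij[of "UNIV :: 'n set" "insert a B"] finB by auto
  then have "a \<in> range f" by (simp add: bij_betw_def)
  then obtain k where k: "f k = a" by blast
  have fB: "f i \<in> B" if "i \<noteq> k" for i
  proof -
    have "f i \<noteq> a" using f k that by (auto simp: bij_betw_def inj_on_def)
    moreover have "f i \<in> insert a B" using f by (auto simp: bij_betw_def)
    ultimately show ?thesis by blast
  qed
  have "det (\<chi> i. f i) \<noteq> 0" using f indep by (intro det_rows_nonzero) (auto simp: bij_betw_def)
  moreover have "(\<chi> i. if i = k then a else f i) = (\<chi> i. f i)"
    by (auto simp: k[symmetric] vec_eq_iff)
  ultimately have "cofactor_vector f k \<bullet> a \<noteq> 0"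
    by (simp add: inner_cofactor_vector)
  moreover have "cofactor_vector f k \<bullet> b = 0" if b: "b \<in> B" for b
  proof -
    have "b \<in> range f" using f b by (auto simp: bij_betw_def)
    then obtain j where j: "f j = b" by blast
    then have "j \<noteq> k" using k \<open>a \<notin> B\<close> b by blast
    then show ?thesis using j cofactor_vector_orthogonal by blast
  qed
  moreover have "cofactor_vector f k \<in> lattice_pts"
    using fB B(1) by (blast intro: cofactor_vector_lattice_pts)
  ultimately show ?thesis
    by (intro bexI[of _ "cofactor_vector f k"] conjI ballI) auto
qed

lemma orthogonal_to_hyperplane_imp_parallel:
  fixes c w :: "'a::real_inner"
  assumes "\<And>x. c \<bullet> x = 0 \<Longrightarrow> w \<bullet> x = 0"
  shows "w = (w \<bullet> c / (c \<bullet> c)) *\<^sub>R c"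
proof (cases "c = 0")
  case True
  then show ?thesis using assms[of w] by simp
next
  case False
  define \<mu> where "\<mu> = w \<bullet> c / (c \<bullet> c)"
  define r where "r = w - \<mu> *\<^sub>R c"
  have "c \<bullet> r = 0" using False by (simp add: r_def \<mu>_def inner_diff_right inner_commute[of c w])
  moreover from this have "w \<bullet> r = 0" by (rule assms)
  moreover have "r \<bullet> r = (w - \<mu> *\<^sub>R c) \<bullet> r" by (simp only: r_def)
  ultimately have "r \<bullet> r = 0" by (simp add: inner_diff_left)
  then show ?thesis by (simp add: r_def \<mu>_def)
qed

lemma exists_lattice_multiple_of_hyperplane_normal:
  fixes T :: "(real^'n) set"
  assumes T: "T \<subseteq> lattice_pts" "T \<subseteq> {x. c \<bullet> x = d}" "aff_dim T = int CARD('n) - 1"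
    and "c \<noteq> 0"
  shows "\<exists>\<mu>>0. \<mu> *\<^sub>R c \<in> lattice_pts"
proof -
  have "T \<noteq> {}" using T(3) by (auto simp: Suc_le_eq)
  then obtain t0 where t0: "t0 \<in> T" by blast
  define D where "D = (+) (- t0) ` T"
  have "dim D = CARD('n) - 1"
    using aff_dim_eq_dim[of t0 T] hull_inc[OF t0] T(3) by (simp add: D_def)
  obtain B where B: "B \<subseteq> D" "independent B" "D \<subseteq> span B" "card B = dim D"
    by (rule basis_exists)
  have "D \<subseteq> {x. c \<bullet> x = 0}" using T(2) t0 by (auto simp: D_def inner_diff_right subset_iff)
  then have "span B \<subseteq> {x. c \<bullet> x = 0}"
    by (intro span_minimal subspace_hyperplane) (use B(1) in auto)
  then have hyperplane_span: "{x. c \<bullet> x = 0} \<subseteq> span B"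
    using B \<open>dim D = _\<close> dim_hyperplane[OF \<open>c \<noteq> 0\<close>]
    by (intro card_ge_dim_independent) auto
  have "D \<subseteq> lattice_pts" using T(1) t0 by (auto simp: D_def intro: lattice_pts_diff)
  then obtain w where w: "w \<in> lattice_pts" "w \<noteq> 0" "\<forall>b\<in>B. w \<bullet> b = 0"
    using exists_lattice_vector_orthogonal[of B] B \<open>dim D = _\<close> by auto
  have "span B \<subseteq> {x. w \<bullet> x = 0}"
    by (intro span_minimal subspace_hyperplane) (use w(3) in auto)
  then have "w = (w \<bullet> c / (c \<bullet> c)) *\<^sub>R c"
    using hyperplane_span by (blast intro: orthogonal_to_hyperplane_imp_parallel)
  then obtain \<mu> where \<mu>: "w = \<mu> *\<^sub>R c" "\<mu> \<noteq> 0" using w(2) by (cases "w \<bullet> c / (c \<bullet> c) = 0") auto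
  show ?thesis
  proof (cases "\<mu> > 0")
    case True
    then show ?thesis using w(1) \<mu> by blast
  next
    case False
    then have "- \<mu> > 0" using \<mu>(2) by simp
    moreover have "(- \<mu>) *\<^sub>R c \<in> lattice_pts"
      using lattice_pts_scaleR[OF w(1), of "- 1"] \<mu>(1) by simp
    ultimately show ?thesis by blast
  qed
qed

section \<open>Primitive facet normals\<close>

lemma primitiveI:
  assumes v: "v \<in> lattice_pts"
    and no_smaller: "\<And>r. 0 < r \<Longrightarrow> r < 1 \<Longrightarrow> r *\<^sub>R v \<in> lattice_pts \<Longrightarrow> False"
  shows "primitive v"
  unfolding primitive_def
proof (intro conjI allI impI v)
  fix c :: real
  assume "c *\<^sub>R v \<in> lattice_pts"
  moreover have "frac c *\<^sub>R v = c *\<^sub>R v - of_int \<lfloor>c\<rfloor> *\<^sub>R v" by (simp add: frac_def algebra_simps)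
  ultimately have "frac c *\<^sub>R v \<in> lattice_pts"
    using v by (simp add: lattice_pts_diff lattice_pts_scaleR)
  then have "\<not> 0 < frac c" using no_smaller frac_lt_1 by blast
  then show "c \<in> \<int>" by simp
qed

(* With N = |w_j| for a nonzero coordinate w_j, the lattice multiples of w are among the
   (k / N) w, and the least positive one is primitive. *)
lemma exists_primitive_multiple:
  fixes w :: "real^'n"
  assumes w: "w \<in> lattice_pts" "w \<noteq> 0"
  shows "\<exists>c>0. primitive (c *\<^sub>R w)"
proof -
  obtain j where wj: "w $ j \<noteq> 0" using w(2) by (auto simp: vec_eq_iff)
  have "w $ j \<in> \<int>" using w(1) by (simp add: lattice_pts_def)
  then obtain z where "w $ j = of_int z" by (auto elim: Ints_cases)
  define N where "N = nat \<bar>z\<bar>"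
  have N: "\<bar>w $ j\<bar> = real N" "0 < N" using \<open>w $ j = of_int z\<close> wj by (auto simp: N_def)
  define good where "good k \<longleftrightarrow> 0 < k \<and> (real k / real N) *\<^sub>R w \<in> lattice_pts" for k
  have "good N" using N w(1) by (simp add: good_def)
  define K where "K = (LEAST k. good k)"
  have K: "good K" unfolding K_def using \<open>good N\<close> by (rule LeastI)
  have K_min: "K \<le> k" if "good k" for k unfolding K_def using that by (rule Least_le)
  define v where "v = (real K / real N) *\<^sub>R w"
  have v: "v \<in> lattice_pts" "\<bar>v $ j\<bar> = real K"
    using K N by (simp_all add: good_def v_def abs_mult)
  have "primitive v"
  proof (rule primitiveI[OF v(1)])
    fix r :: real
    assume r: "0 < r" "r < 1" and rv: "r *\<^sub>R v \<in> lattice_pts"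
    then have "\<bar>(r *\<^sub>R v) $ j\<bar> \<in> \<int>" by (simp add: lattice_pts_def)
    then obtain q where q: "r * real K = of_int q"
      using v(2) r(1) by (auto simp: abs_mult elim: Ints_cases)
    have "0 < r * real K" using r(1) K by (simp add: good_def)
    then have "0 < q" using q by simp
    have "r * real K < real K" using mult_strict_right_mono[of r 1 "real K"] r K by (simp add: good_def)
    then have "real_of_int q < real_of_int (int K)" using q by simp
    then have "q < int K" by (simp only: of_int_less_iff)
    have "(real (nat q) / real N) *\<^sub>R w = r *\<^sub>R v"
      using q \<open>0 < q\<close> by (simp add: v_def)
    then have "good (nat q)" using rv \<open>0 < q\<close> by (simp add: good_def)
    then have "K \<le> nat q" by (rule K_min)
    then show False using \<open>q < int K\<close> \<open>0 < q\<close> by (simp add: le_nat_iff)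
  qed
  moreover have "0 < real K / real N" using K N by (simp add: good_def)
  ultimately show ?thesis unfolding v_def by blast
qed

lemma primitive_nonzero: "primitive v \<Longrightarrow> v \<noteq> 0"
proof
  assume "primitive v" "v = 0"
  then have "(1 / 2 :: real) *\<^sub>R v \<in> lattice_pts" by (simp add: lattice_pts_def)
  with \<open>primitive v\<close> have "(1 / 2 :: real) \<in> \<int>" unfolding primitive_def by blast
  from Ints_nonzero_abs_ge1[OF this] show False by simp
qed

lemma facet_normal_lattice_pts: "facet_normal Q v h \<Longrightarrow> v \<in> lattice_pts"
  by (auto simp: facet_normal_def primitive_def)

lemma facet_normal_nonzero: "facet_normal Q v h \<Longrightarrow> v \<noteq> 0"
  by (auto simp: facet_normal_def dest: primitive_nonzero)

lemma lattice_polytope_facet_vertices: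
  assumes "lattice_polytope Q" "G facet_of Q"
  obtains S where "S \<noteq> {}" "S \<subseteq> lattice_pts" "G = convex hull S"
proof -
  obtain V where V: "finite V" "V \<subseteq> lattice_pts" "Q = convex hull V"
    using assms(1) by (auto simp: lattice_polytope_def)
  have "G face_of convex hull V" using assms(2) V(3) by (simp add: facet_of_def)
  then obtain S where S: "S \<subseteq> V" "G = convex hull S"
    by (rule face_of_convex_hull_subset[OF finite_imp_compact[OF V(1)]])
  have "S \<noteq> {}" using assms(2) S(2) by (auto simp: facet_of_def)
  then show thesis using that S(2) order_trans[OF S(1) V(2)] by blast
qed

lemma facet_normal_height_Ints:
  assumes "lattice_polytope Q" "facet_normal Q v h"
  shows "h \<in> \<int>"
proof -
  obtain G where G: "G facet_of Q" "G \<subseteq> {x. v \<bullet> x = - h}"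
    using assms(2) by (auto simp: facet_normal_def)
  obtain S where S: "S \<noteq> {}" "S \<subseteq> lattice_pts" "G = convex hull S"
    by (rule lattice_polytope_facet_vertices[OF assms(1) G(1)])
  then obtain t where t: "t \<in> S" "t \<in> lattice_pts" by blast
  then have "v \<bullet> t = - h" using G(2) S(3) hull_subset[of S convex] by blast
  moreover have "v \<bullet> t \<in> \<int>"
    using lattice_pts_inner_Ints[OF facet_normal_lattice_pts[OF assms(2)] t(2)] .
  ultimately have "- h \<in> \<int>" by simp
  then show ?thesis using Ints_minus[of "- h"] by simp
qed

lemma facet_normal_dil:
  fixes P :: "(real^'n) set"
  assumes k: "0 < k" and fn: "facet_normal (dil k P) v h"
  shows "facet_normal P v (h / real k)"
proof -
  define f where "f = (\<lambda>x::real^'n. (1 / real k) *\<^sub>R x)"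
  have f: "linear f" "inj f" using k by (auto simp: f_def linear_scaleR inj_on_def)
  have fP: "f ` dil k P = P" using k by (simp add: f_def dil_def image_image)
  obtain G where G: "G facet_of dil k P" "primitive v" "dil k P \<subseteq> {x. - h \<le> v \<bullet> x}"
      "G \<subseteq> {x. v \<bullet> x = - h}"
    using fn by (auto simp: facet_normal_def)
  have "f ` G facet_of f ` dil k P"
    using G(1) f by (simp add: facet_of_def face_of_linear_image)
  then have "f ` G facet_of P" by (simp only: fP)
  moreover have "P \<subseteq> {x. - (h / real k) \<le> v \<bullet> x}"
  proof
    fix x assume "x \<in> P"
    then have "- h \<le> real k * (v \<bullet> x)" using G(3) by (force simp: dil_def)
    then show "x \<in> {x. - (h / real k) \<le> v \<bullet> x}" using k by (simp add: field_simps)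
  qed
  moreover have "f ` G \<subseteq> {x. v \<bullet> x = - (h / real k)}" using G(4) by (auto simp: f_def)
  ultimately show ?thesis using G(2) by (auto simp: facet_normal_def)
qed

lemma aff_dim_nonempty_interior:
  fixes Q :: "(real^'n) set"
  assumes "interior Q \<noteq> {}"
  shows "aff_dim Q = int CARD('n)"
proof -
  have "aff_dim Q = aff_dim (affine hull Q)" by simp
  also have "\<dots> = int CARD('n)" using affine_hull_nonempty_interior[OF assms] by simp
  finally show ?thesis .
qed

lemma facet_normal_of_facet:
  fixes Q :: "(real^'n) set"
  assumes Q: "lattice_polytope Q" "interior Q \<noteq> {}"
    and C: "Q \<inter> {x. c \<bullet> x = d} facet_of Q" and Q_le: "Q \<subseteq> {x. c \<bullet> x \<le> d}" and "c \<noteq> 0"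
  shows "\<exists>k>0. facet_normal Q (- (k *\<^sub>R c)) (k * d)"
proof -
  obtain S where S: "S \<noteq> {}" "S \<subseteq> lattice_pts" "Q \<inter> {x. c \<bullet> x = d} = convex hull S"
    by (rule lattice_polytope_facet_vertices[OF Q(1) C])
  have "aff_dim S = int CARD('n) - 1"
    using C S(3) aff_dim_nonempty_interior[OF Q(2)] by (simp add: facet_of_def aff_dim_convex_hull)
  moreover have "S \<subseteq> {x. c \<bullet> x = d}" using S(3) hull_subset[of S convex] by blast
  ultimately obtain \<mu> where \<mu>: "0 < \<mu>" "\<mu> *\<^sub>R c \<in> lattice_pts"
    using exists_lattice_multiple_of_hyperplane_normal[OF S(2) _ _ \<open>c \<noteq> 0\<close>] by blast
  have "- (\<mu> *\<^sub>R c) \<in> lattice_pts" using lattice_pts_scaleR[OF \<mu>(2), of "- 1"] by simp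
  moreover have "- (\<mu> *\<^sub>R c) \<noteq> 0" using \<mu>(1) \<open>c \<noteq> 0\<close> by simp
  ultimately obtain c' where c': "0 < c'" "primitive (c' *\<^sub>R - (\<mu> *\<^sub>R c))"
    using exists_primitive_multiple by blast
  define k where "k = c' * \<mu>"
  have "0 < k" using c'(1) \<mu>(1) by (simp add: k_def)
  have "facet_normal Q (- (k *\<^sub>R c)) (k * d)"
    unfolding facet_normal_def
  proof (intro exI conjI)
    show "Q \<inter> {x. c \<bullet> x = d} facet_of Q" by (fact C)
    show "primitive (- (k *\<^sub>R c))" using c'(2) by (simp add: k_def)
    show "Q \<subseteq> {x. - (k * d) \<le> - (k *\<^sub>R c) \<bullet> x}"
      using Q_le \<open>0 < k\<close> by (auto simp: mult_left_mono)
    show "Q \<inter> {x. c \<bullet> x = d} \<subseteq> {x. - (k *\<^sub>R c) \<bullet> x = - (k * d)}"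
      by auto
  qed
  then show ?thesis using \<open>0 < k\<close> by blast
qed

lemma exists_facet_normal_violated:
  fixes Q :: "(real^'n) set"
  assumes Q: "lattice_polytope Q" "interior Q \<noteq> {}" and "y \<notin> Q"
  shows "\<exists>v h. facet_normal Q v h \<and> v \<bullet> y < - h"
proof -
  have "polyhedron Q"
    using Q(1) by (auto simp: lattice_polytope_def intro: polyhedron_convex_hull)
  then obtain F where F: "finite F" "Q = affine hull Q \<inter> \<Inter>F"
    and halfspaces: "\<And>h. h \<in> F \<Longrightarrow> \<exists>a b. a \<noteq> 0 \<and> h = {x. a \<bullet> x \<le> b}"
    and minimal: "\<And>F'. F' \<subset> F \<Longrightarrow> Q \<subset> affine hull Q \<inter> \<Inter>F'"
    by (simp add: polyhedron_Int_affine_minimal) meson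
  obtain a b where ab: "\<And>h. h \<in> F \<Longrightarrow> a h \<noteq> 0 \<and> h = {x. a h \<bullet> x \<le> b h}"
    using halfspaces by metis
  have "affine hull Q = UNIV" using affine_hull_nonempty_interior[OF Q(2)] .
  then obtain h where h: "h \<in> F" "y \<notin> h" using F(2) \<open>y \<notin> Q\<close> by auto
  have "Q \<inter> {x. a h \<bullet> x = b h} facet_of Q"
    using facet_of_polyhedron_explicit[OF F ab minimal] h(1) by blast
  moreover have "Q \<subseteq> {x. a h \<bullet> x \<le> b h}" using F(2) h(1) ab[OF h(1)] by blast
  ultimately obtain k where k: "0 < k" "facet_normal Q (- (k *\<^sub>R a h)) (k * b h)"
    using facet_normal_of_facet[OF Q] ab[OF h(1)] by blast
  have "b h < a h \<bullet> y" using h(2) ab[OF h(1)] by auto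
  then have "- (k *\<^sub>R a h) \<bullet> y < - (k * b h)" using k(1) by simp
  then show ?thesis using k(2) by blast
qed

section \<open>Floor and remainder polytopes\<close>

lemma lattice_polytope_dil:
  assumes "lattice_polytope P"
  shows "lattice_polytope (dil k P)"
proof -
  obtain S where S: "finite S" "S \<subseteq> lattice_pts" "P = convex hull S"
    using assms by (auto simp: lattice_polytope_def)
  have "dil k P = convex hull ((\<lambda>x. real k *\<^sub>R x) ` S)"
    by (simp add: dil_def S(3) convex_hull_scaling)
  moreover have "(\<lambda>x. real k *\<^sub>R x) ` S \<subseteq> lattice_pts"
    using S(2) by (auto intro!: lattice_pts_scaleR)
  ultimately show ?thesis using S(1) by (auto simp: lattice_polytope_def)
qed

lemma lattice_polytope_compact: "lattice_polytope P \<Longrightarrow> compact P"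
  by (auto simp: lattice_polytope_def intro: compact_convex_hull finite_imp_compact)

lemma lattice_polytope_convex: "lattice_polytope P \<Longrightarrow> convex P"
  by (auto simp: lattice_polytope_def)

lemma dil_Suc_subset: "dil (Suc m) P \<subseteq> dil m P + P"
proof
  fix y assume "y \<in> dil (Suc m) P"
  then obtain p where "p \<in> P" "y = real m *\<^sub>R p + p" by (auto simp: dil_def algebra_simps)
  then show "y \<in> dil m P + P" by (auto simp: dil_def)
qed

definition remainder_pts :: "(real^'n) set \<Rightarrow> (real^'n) set" where
  "remainder_pts Q = {x \<in> lattice_pts. \<forall>v h. facet_normal Q v h \<longrightarrow>
      (real (codegree Q) - 1) * h - 1 \<le> v \<bullet> x}"

lemma remainder_eq_hull: "remainder Q = convex hull remainder_pts Q"
  by (simp add: remainder_def remainder_pts_def)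

lemma remainder_compact:
  assumes "bounded (remainder Q)"
  shows "compact (remainder Q)"
proof -
  have "remainder_pts Q \<subseteq> remainder Q" by (simp add: remainder_eq_hull hull_subset)
  then have "bounded (remainder_pts Q)" using assms by (rule bounded_subset[rotated])
  then have "finite (remainder_pts Q)"
    by (rule bounded_lattice_pts_finite) (auto simp: remainder_pts_def)
  then show ?thesis by (simp add: remainder_eq_hull compact_convex_hull finite_imp_compact)
qed

lemma codegree_eq_1:
  assumes "interior Q \<inter> lattice_pts \<noteq> {}"
  shows "codegree Q = 1"
  unfolding codegree_def by (rule Least_equality) (use assms in \<open>auto simp: dil_def\<close>)

lemma lfloor_subset: "convex Q \<Longrightarrow> lfloor Q \<subseteq> Q"
  unfolding lfloor_def by (rule hull_minimal) (auto dest: subsetD[OF interior_subset])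

lemma lfloor_dil_nonempty_imp:
  assumes "lfloor (dil a P) \<noteq> {}"
  shows "0 < a" "codegree (dil a P) = 1"
proof -
  have int: "interior (dil a P) \<inter> lattice_pts \<noteq> {}" using assms by (auto simp: lfloor_def)
  then show "codegree (dil a P) = 1" by (rule codegree_eq_1)
  show "0 < a"
  proof (rule ccontr)
    assume "\<not> 0 < a"
    then have "dil a P \<subseteq> {0}" by (auto simp: dil_def)
    then show False using int interior_mono[of "dil a P" "{0}"] by auto
  qed
qed

lemma lfloor_plus_remainder_subset:
  assumes Q: "lattice_polytope Q"
  shows "lfloor Q + remainder Q \<subseteq> Q"
proof (cases "interior Q \<inter> lattice_pts = {}")
  case True
  then show ?thesis by (simp add: lfloor_def)
next
  case False
  then have "codegree Q = 1" by (rule codegree_eq_1)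
  have "(interior Q \<inter> lattice_pts) + remainder_pts Q \<subseteq> Q"
  proof
    fix y assume "y \<in> (interior Q \<inter> lattice_pts) + remainder_pts Q"
    then obtain x z where y: "y = x + z" and x: "x \<in> interior Q" "x \<in> lattice_pts"
      and z: "z \<in> remainder_pts Q"
      by (auto elim: set_plus_elim)
    show "y \<in> Q"
    proof (rule ccontr)
      assume "y \<notin> Q"
      then obtain v h where vh: "facet_normal Q v h" and "v \<bullet> y < - h"
        using exists_facet_normal_violated[OF Q] False by blast
      have "Q \<subseteq> {x. - h \<le> v \<bullet> x}" using vh by (auto simp: facet_normal_def)
      then have "interior Q \<subseteq> {x. - h < v \<bullet> x}"
        using interior_mono interior_halfspace_ge[OF facet_normal_nonzero[OF vh]] by blast
      then have "- h < v \<bullet> x" using x(1) by blast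
      moreover have "- h \<in> \<int>" using facet_normal_height_Ints[OF Q vh] by simp
      ultimately have "- h + 1 \<le> v \<bullet> x"
        using lattice_pts_inner_Ints[OF facet_normal_lattice_pts[OF vh] x(2)]
        by (blast intro: Ints_less_imp_add_one_le)
      moreover have "- 1 \<le> v \<bullet> z"
        using z vh \<open>codegree Q = 1\<close> by (auto simp: remainder_pts_def)
      ultimately show False using \<open>v \<bullet> y < - h\<close> by (simp add: y inner_add_right)
    qed
  qed
  then have "convex hull ((interior Q \<inter> lattice_pts) + remainder_pts Q) \<subseteq> Q"
    using lattice_polytope_convex[OF Q] by (rule hull_minimal)
  then show ?thesis by (simp add: lfloor_def remainder_eq_hull convex_hull_set_plus)
qed

lemma dil_pred_plus_remainder_subset:
  fixes P :: "(real^'n) set"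
  assumes P: "lattice_polytope P" and "0 < a" and "codegree P = a"
    and "codegree (dil a P) = 1"
  shows "dil (a - 1) P + remainder P \<subseteq> remainder (dil a P)"
proof -
  obtain S where S: "finite S" "S \<subseteq> lattice_pts" "P = convex hull S"
    using P by (auto simp: lattice_polytope_def)
  let ?scale = "\<lambda>x. real (a - 1) *\<^sub>R x"
  have "?scale ` S + remainder_pts P \<subseteq> remainder_pts (dil a P)"
  proof
    fix y assume "y \<in> ?scale ` S + remainder_pts P"
    then obtain s t where y: "y = real (a - 1) *\<^sub>R s + t" and s: "s \<in> S" and t: "t \<in> remainder_pts P"
      by (auto elim: set_plus_elim)
    have "y \<in> lattice_pts"
      using s t S(2) by (auto simp: y remainder_pts_def intro!: lattice_pts_add lattice_pts_scaleR)
    moreover have "- 1 \<le> v \<bullet> y" if vh: "facet_normal (dil a P) v h" for v h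
    proof -
      have vhP: "facet_normal P v (h / real a)" using facet_normal_dil[OF \<open>0 < a\<close> vh] .
      have "s \<in> P" using s S(3) hull_subset[of S convex] by blast
      then have "- (h / real a) \<le> v \<bullet> s" using vhP by (auto simp: facet_normal_def)
      then have "real (a - 1) * - (h / real a) \<le> real (a - 1) * (v \<bullet> s)"
        by (rule mult_left_mono) simp
      moreover have "(real a - 1) * (h / real a) - 1 \<le> v \<bullet> t"
        using t vhP unfolding remainder_pts_def \<open>codegree P = a\<close> by blast
      ultimately show ?thesis
        using \<open>0 < a\<close> by (simp add: y inner_add_right of_nat_diff algebra_simps)
    qed
    ultimately show "y \<in> remainder_pts (dil a P)"
      unfolding remainder_pts_def \<open>codegree (dil a P) = 1\<close> by auto
  qed
  then have "convex hull (?scale ` S + remainder_pts P) \<subseteq> remainder (dil a P)"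
    by (simp add: remainder_eq_hull hull_mono)
  then show ?thesis
    by (simp add: convex_hull_set_plus convex_hull_scaling dil_def S(3) remainder_eq_hull)
qed

section \<open>Cancellation in Minkowski sums\<close>

lemma bounded_set_plus_cancel_left:
  fixes A B :: "'a::real_normed_vector set"
  assumes "bounded (A + B)" "A \<noteq> {}"
  shows "bounded B"
proof -
  obtain a where a: "a \<in> A" using assms(2) by blast
  have "B \<subseteq> (\<lambda>x. - a + x) ` (A + B)"
  proof
    fix b assume "b \<in> B"
    with a have "a + b \<in> A + B" by (rule set_plus_intro)
    then show "b \<in> (\<lambda>x. - a + x) ` (A + B)" by (intro image_eqI[where x = "a + b"]) auto
  qed
  then show ?thesis using bounded_translation[OF assms(1)] bounded_subset by blast
qed

lemma compact_set_plus:
  fixes A B :: "'a::real_normed_vector set"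
  assumes "compact A" "compact B"
  shows "compact (A + B)"
proof -
  have "A + B = {x + y |x y. x \<in> A \<and> y \<in> B}" by (auto simp: set_plus_def)
  then show ?thesis using compact_sums[OF assms] by simp
qed

(* Separate a point b of B - C from C by a linear functional u; adding b to a point of A where
   u is almost minimal then leaves A + C. *)
lemma set_plus_subset_cancel_left:
  fixes A B C :: "'a::euclidean_space set"
  assumes A: "bounded A" "A \<noteq> {}" and C: "closed C" "convex C" and sub: "A + B \<subseteq> A + C"
  shows "B \<subseteq> C"
proof
  fix b assume b: "b \<in> B"
  show "b \<in> C"
  proof (rule ccontr)
    assume "b \<notin> C"
    then obtain u \<beta> where u: "u \<bullet> b < \<beta>" "\<And>x. x \<in> C \<Longrightarrow> \<beta> < u \<bullet> x"
      using separating_hyperplane_closed_point[OF C(2,1)] by blast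
    define U where "U = (\<lambda>x. u \<bullet> x) ` A"
    have "bdd_below U"
      unfolding U_def using bounded_linear_image[OF A(1) bounded_linear_inner_right]
      by (rule bounded_imp_bdd_below)
    have "U \<noteq> {}" using A(2) by (simp add: U_def)
    moreover have "Inf U < Inf U + (\<beta> - u \<bullet> b)" using u(1) by simp
    ultimately obtain t where "t \<in> U" "t < Inf U + (\<beta> - u \<bullet> b)" by (rule cInf_lessD[elim_format]) blast
    then obtain a0 where a0: "a0 \<in> A" "u \<bullet> a0 < Inf U + (\<beta> - u \<bullet> b)" by (auto simp: U_def)
    have "a0 + b \<in> A + C" using sub a0(1) b by blast
    then obtain a' c where ac: "a0 + b = a' + c" "a' \<in> A" "c \<in> C" by (rule set_plus_elim)
    have "Inf U \<le> u \<bullet> a'" using ac(2) \<open>bdd_below U\<close> by (auto simp: U_def intro: cInf_lower)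
    moreover have "\<beta> < u \<bullet> c" using u(2) ac(3) .
    moreover have "u \<bullet> a0 + u \<bullet> b = u \<bullet> a' + u \<bullet> c" using arg_cong[OF ac(1), of "\<lambda>x. u \<bullet> x"] by (simp add: inner_add_right)
    ultimately show False using a0(2) by linarith
  qed
qed

lemma compact_remainder_if_set_plus:
  assumes "lattice_polytope P" "P = A + remainder P" "A \<noteq> {}"
  shows "compact (remainder P)"
proof -
  have "bounded (A + remainder P)"
    using compact_imp_bounded[OF lattice_polytope_compact[OF assms(1)]] assms(2) by simp
  then show ?thesis using assms(3) by (simp add: remainder_compact bounded_set_plus_cancel_left)
qed

lemma lfloor_set_plus_cancel:
  assumes "lattice_polytope Q" "lfloor Q \<noteq> {}" "compact K" "convex K"
    and "lfloor Q + X \<subseteq> lfloor Q + K"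
  shows "X \<subseteq> K"
proof (rule set_plus_subset_cancel_left)
  show "bounded (lfloor Q)"
    using lfloor_subset[OF lattice_polytope_convex[OF assms(1)]]
      compact_imp_bounded[OF lattice_polytope_compact[OF assms(1)]] by (rule bounded_subset[rotated])
  show "closed K" using assms(3) by (rule compact_imp_closed)
qed (use assms in auto)

theorem lemma3p17:
  fixes P :: "(real^'n) set" and a :: nat
  assumes "lattice_polytope P"
    and "interior P \<noteq> {}"
    and "a = codegree P"
    and "P = lfloor (dil a P) + remainder P"
  shows "dil a P = lfloor (dil a P) + remainder (dil a P) \<and>
         remainder (dil a P) = dil (a - 1) P + remainder P"
proof -
  define Q where "Q = dil a P"
  define A where "A = lfloor Q"
  define R where "R = remainder P"
  define D where "D = dil (a - 1) P"
  have P: "P = A + R" and Q: "lattice_polytope Q"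
    using assms(1,4) by (simp_all add: Q_def A_def R_def lattice_polytope_dil)
  have "A \<noteq> {}" using P assms(2) interior_subset by fastforce
  then have "0 < a" and "codegree Q = 1" using lfloor_dil_nonempty_imp by (simp_all add: A_def Q_def)
  have "Q \<subseteq> D + P" using dil_Suc_subset[of "a - 1" P] \<open>0 < a\<close> by (simp add: Q_def D_def)
  then have Q_sub: "Q \<subseteq> A + (D + R)" by (simp add: P add_ac)
  have D_R: "D + R \<subseteq> remainder Q"
    using dil_pred_plus_remainder_subset[OF assms(1) \<open>0 < a\<close> assms(3)[symmetric]] \<open>codegree Q = 1\<close>
    by (simp add: Q_def D_def R_def)
  have Q_eq: "Q = A + remainder Q"
  proof
    show "A + remainder Q \<subseteq> Q" using lfloor_plus_remainder_subset[OF Q] by (simp add: A_def)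
    show "Q \<subseteq> A + remainder Q" using Q_sub set_plus_mono2[OF order_refl D_R] by (rule order_trans)
  qed
  have "compact R"
    unfolding R_def by (rule compact_remainder_if_set_plus[OF assms(1) P[unfolded R_def] \<open>A \<noteq> {}\<close>])
  then have "compact (D + R)" "convex (D + R)"
    using assms(1) by (simp_all add: D_def R_def compact_set_plus lattice_polytope_compact
        lattice_polytope_dil convex_set_plus lattice_polytope_convex remainder_eq_hull)
  moreover have "A + remainder Q \<subseteq> A + (D + R)" using Q_sub by (simp only: Q_eq[symmetric])
  ultimately have "remainder Q \<subseteq> D + R"
    using lfloor_set_plus_cancel[OF Q, folded A_def] \<open>A \<noteq> {}\<close> by blast
  then show ?thesis using Q_eq D_R by (simp add: Q_def A_def R_def D_def)
qed

end
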